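(* Let $n\in\mathbb{N}$ and let $m_1,\dots,m_n>0$ be arbitrary masses. Consider $n$ point particles on the real line with positions $q_1(t)<q_2(t)<\dots<q_n(t)$ (ties only at collision instants), moving freely with constant velocities between collisions and undergoing elastic binary collisions (as described in the context), with the motion considered for all times $t\in\mathbb{R}$. If the total number of collisions (over all $t\in\mathbb{R}$) is strictly smaller than $n-1$, then all particles have the same velocity, so that in fact no collision occurs at all.
   Context: Dynamics: $n$ point particles of masses $m_1,\dots,m_n>0$ move on $\mathbb{R}$; their order is preserved, i.e. $q_k(t)\le q_{k+1}(t)$ for all $t$. Between collisions each particle moves with constant velocity. A collision is an instant where $q_i=q_{i+1}$; in a binary collision of particles $i$ and $i+1$ with incoming velocities $v_i,v_{i+1}$, the outgoing velocities are $v_i'=\frac{(m_i-m_{i+1})v_i+2m_{i+1}v_{i+1}}{m_i+m_{i+1}}$, $v_{i+1}'=\frac{(m_{i+1}-m_i)v_{i+1}+2m_i v_i}{m_i+m_{i+1}}$ (conservation of momentum and kinetic energy); all other velocities are unchanged. *)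

theory Defs
  imports "HOL-Analysis.Analysis"
begin

text \<open>Particles are indexed 0, ..., n-1; q i t is the position of particle i at time t,
  m i its mass.  A collision is a pair (t, i) with particles i and i+1 at the same place at time t.\<close>

definition collisions :: "nat \<Rightarrow> (nat \<Rightarrow> real \<Rightarrow> real) \<Rightarrow> (real \<times> nat) set" where
  "collisions n q = {(t, i). Suc i < n \<and> q i t = q (Suc i) t}"

definition out_left :: "real \<Rightarrow> real \<Rightarrow> real \<Rightarrow> real \<Rightarrow> real" where
  "out_left mi mj vi vj = ((mi - mj) * vi + 2 * mj * vj) / (mi + mj)"

definition out_right :: "real \<Rightarrow> real \<Rightarrow> real \<Rightarrow> real \<Rightarrow> real" where
  "out_right mi mj vi vj = ((mj - mi) * vj + 2 * mi * vi) / (mi + mj)"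

definition elastic_motion :: "nat \<Rightarrow> (nat \<Rightarrow> real) \<Rightarrow> (nat \<Rightarrow> real \<Rightarrow> real) \<Rightarrow> bool" where
  "elastic_motion n m q \<longleftrightarrow>
     \<comment> \<open>continuous trajectories\<close>
     (\<forall>i<n. continuous_on UNIV (q i)) \<and>
     \<comment> \<open>order is preserved\<close>
     (\<forall>t i. Suc i < n \<longrightarrow> q i t \<le> q (Suc i) t) \<and>
     \<comment> \<open>free motion with constant velocity on collision-free time intervals\<close>
     (\<forall>a b. a < b \<and> (\<forall>t\<in>{a<..<b}. \<forall>i. (t, i) \<notin> collisions n q) \<longrightarrow>
        (\<forall>i<n. \<exists>v c. \<forall>t\<in>{a<..<b}. q i t = v * t + c)) \<and>
     \<comment> \<open>at every instant: incoming (left) and outgoing (right) velocities exist,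
         only binary collisions occur, and the elastic collision law holds\<close>
     (\<forall>t. \<exists>vl vr :: nat \<Rightarrow> real.
        (\<forall>i<n. (q i has_real_derivative vl i) (at_left t) \<and>
               (q i has_real_derivative vr i) (at_right t)) \<and>
        (\<forall>i. Suc (Suc i) < n \<longrightarrow> \<not> (q i t = q (Suc i) t \<and> q (Suc i) t = q (Suc (Suc i)) t)) \<and>
        (\<forall>i. Suc i < n \<longrightarrow> q i t = q (Suc i) t \<longrightarrow>
              vr i = out_left (m i) (m (Suc i)) (vl i) (vl (Suc i)) \<and>
              vr (Suc i) = out_right (m i) (m (Suc i)) (vl i) (vl (Suc i))) \<and>
        (\<forall>i<n. (\<not> (Suc i < n \<and> q i t = q (Suc i) t)) \<and>
               (\<not> (0 < i \<and> q (i - 1) t = q i t)) \<longrightarrow> vr i = vl i))"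

end

theory Submission
  imports Defs
begin

text \<open>
  If fewer than n - 1 collisions happen, some neighbouring pair i0, i0 + 1 never
  collides.  Between collisions the trajectories are affine, and at a collision momentum is
  conserved, so the total momentum of the left cluster 0..i0 and that of all particles are
  constant; hence the centres of mass of both clusters move uniformly.  Their distance is affine
  in time and nonnegative (the clusters never interpenetrate), so it is constant, and it bounds
  the spread q (n - 1) - q 0 of the whole system for all times.  Before the first collision every
  particle moves freely, and bounded spread forces all these free velocities to be equal.  Equal
  incoming velocities are preserved by elastic collisions, so a continuation argument over the
  (finitely many) collision times shows that all particles move with one common velocity for all
  times.  Two particles moving with equal velocity that meet once coincide forever, which would
  produce infinitely many collisions; so there are none.
\<close>

lemma affine_germ:
  fixes f :: "real \<Rightarrow> real"
  assumes cont: "isCont f u" and nontriv: "at u within S \<noteq> bot"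
    and ev: "eventually (\<lambda>y. f y = a * y + b) (at u within S)"
  shows "f u = a * u + b" and "(f has_real_derivative a) (at u within S)"
proof -
  have "(f \<longlongrightarrow> f u) (at u within S)"
    using continuous_at_imp_continuous_within[OF cont] by (simp add: continuous_within)
  moreover have "(f \<longlongrightarrow> a * u + b) (at u within S)"
  proof (rule Lim_transform_eventually)
    show "((\<lambda>y. a * y + b) \<longlongrightarrow> a * u + b) (at u within S)" by (intro tendsto_intros)
    show "eventually (\<lambda>y. a * y + b = f y) (at u within S)" using ev by (simp add: eq_commute)
  qed
  ultimately show val: "f u = a * u + b" using nontriv tendsto_unique by blast
  have "((\<lambda>y. a * y + b) has_real_derivative a) (at u within S)"
    by (auto intro!: derivative_eq_intros)
  with has_field_derivative_cong_eventually[OF ev val] show "(f has_real_derivative a) (at u within S)"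
    by simp
qed

lemma affine_eq_on_interval:
  fixes v c v' c' :: real
  assumes "a < b" and "\<forall>t\<in>{a<..<b}. v * t + c = v' * t + c'"
  shows "v = v' \<and> c = c'"
proof -
  define s t where "s = (2 * a + b) / 3" and "t = (a + 2 * b) / 3"
  have "s \<in> {a<..<b}" "t \<in> {a<..<b}" "s < t" using \<open>a < b\<close> by (auto simp: s_def t_def)
  then have "v * s + c = v' * s + c'" "v * t + c = v' * t + c'"
    using assms(2) by blast+
  then have "(v - v') * (t - s) = 0" by (simp add: algebra_simps)
  then have "v = v'" using \<open>s < t\<close> by simp
  with \<open>v * s + c = v' * s + c'\<close> show ?thesis by simp
qed

lemma finite_gap_right:
  fixes T :: "real set"
  assumes "finite T"
  obtains \<delta> where "\<delta> > 0" and "{u<..<u + \<delta>} \<inter> T = {}"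
proof -
  have "eventually (\<lambda>y. y \<notin> T) (at u)"
    using islimpt_finite[OF assms] islimpt_iff_eventually by blast
  then have "eventually (\<lambda>y. y \<notin> T) (at_right u)"
    by (rule filter_leD[OF at_le, rotated]) simp
  then obtain b where "b > u" "\<forall>y>u. y < b \<longrightarrow> y \<notin> T"
    by (auto simp: eventually_at_right_field)
  then show ?thesis by (intro that[of "b - u"]) auto
qed

lemma real_induct_right:
  fixes Q :: "real \<Rightarrow> bool"
  assumes start: "\<forall>s<t0. Q s"
    and step: "\<And>u. \<forall>s<u. Q s \<Longrightarrow> \<exists>\<delta>>0. \<forall>s<u + \<delta>. Q s"
  shows "Q t"
proof (rule ccontr)
  assume "\<not> Q t"
  define B where "B = {s. \<not> Q s}"
  have "B \<noteq> {}" using \<open>\<not> Q t\<close> by (auto simp: B_def)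
  have bdd: "bdd_below B"
    using start by (intro bdd_belowI[of _ t0]) (auto simp: B_def not_less)
  have "\<forall>s<Inf B. Q s"
    using cInf_lower[OF _ bdd] by (force simp: B_def)
  then obtain \<delta> where "\<delta> > 0" "\<forall>s<Inf B + \<delta>. Q s" using step by blast
  moreover obtain s where "s \<in> B" "s < Inf B + \<delta>"
    using cInf_less_iff[OF \<open>B \<noteq> {}\<close> bdd] \<open>\<delta> > 0\<close> by (metis less_add_same_cancel1)
  ultimately show False by (simp add: B_def)
qed

lemma affine_bounded_on_left_halfline:
  fixes \<alpha> \<beta> K :: real
  assumes "\<forall>s<t1. 0 \<le> \<alpha> * s + \<beta> \<and> \<alpha> * s + \<beta> \<le> K"
  shows "\<alpha> = 0"
proof (rule ccontr)
  assume "\<alpha> \<noteq> 0"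
  define s2 where "s2 = t1 - 1 - (\<bar>K\<bar> + 1) / \<bar>\<alpha>\<bar>"
  have "(\<bar>K\<bar> + 1) / \<bar>\<alpha>\<bar> > 0" using \<open>\<alpha> \<noteq> 0\<close> by simp
  then have "s2 < t1" by (simp add: s2_def)
  then have "\<bar>(\<alpha> * (t1 - 1) + \<beta>) - (\<alpha> * s2 + \<beta>)\<bar> \<le> K"
    using assms[rule_format, of "t1 - 1"] assms[rule_format, of s2] by auto
  moreover have "(\<alpha> * (t1 - 1) + \<beta>) - (\<alpha> * s2 + \<beta>) = \<alpha> * ((\<bar>K\<bar> + 1) / \<bar>\<alpha>\<bar>)"
    by (simp add: s2_def algebra_simps)
  then have "\<bar>(\<alpha> * (t1 - 1) + \<beta>) - (\<alpha> * s2 + \<beta>)\<bar> = \<bar>K\<bar> + 1"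
    using \<open>\<alpha> \<noteq> 0\<close> by (simp add: abs_mult)
  ultimately show False by linarith
qed

lemma affine_nonneg_is_constant:
  fixes \<alpha> \<beta> :: real
  assumes "\<forall>t. 0 \<le> \<alpha> * t + \<beta>"
  shows "\<alpha> = 0"
proof (rule ccontr)
  assume "\<alpha> \<noteq> 0"
  then have "\<alpha> * (- (\<beta> + 1) / \<alpha>) + \<beta> = -1" by simp
  with assms show False by (metis neg_0_le_iff_le not_one_le_zero)
qed

definition piecewise_affine :: "real set \<Rightarrow> (real \<Rightarrow> real) \<Rightarrow> bool" where
  "piecewise_affine T f \<longleftrightarrow> continuous_on UNIV f \<and>
     (\<forall>a b. a < b \<and> {a<..<b} \<inter> T = {} \<longrightarrow> (\<exists>v c. \<forall>t\<in>{a<..<b}. f t = v * t + c))"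

lemma piecewise_affine_sum:
  fixes f :: "'j \<Rightarrow> real \<Rightarrow> real"
  assumes "finite J" and "\<forall>j\<in>J. piecewise_affine T (f j)"
  shows "piecewise_affine T (\<lambda>t. \<Sum>j\<in>J. w j * f j t)"
  using assms
proof (induction J rule: finite_induct)
  case empty
  show ?case by (auto simp: piecewise_affine_def intro: exI[of _ 0])
next
  case (insert k J)
  have pk: "piecewise_affine T (f k)" and pJ: "piecewise_affine T (\<lambda>t. \<Sum>j\<in>J. w j * f j t)"
    using insert by auto
  have "continuous_on UNIV (\<lambda>t. w k * f k t + (\<Sum>j\<in>J. w j * f j t))"
    using pk pJ by (auto simp: piecewise_affine_def intro!: continuous_intros)
  moreover have "\<exists>v c. \<forall>t\<in>{a<..<b}. w k * f k t + (\<Sum>j\<in>J. w j * f j t) = v * t + c"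
    if ab: "a < b" "{a<..<b} \<inter> T = {}" for a b
  proof -
    obtain v c where "\<forall>t\<in>{a<..<b}. f k t = v * t + c"
      using pk ab unfolding piecewise_affine_def by blast
    moreover obtain v' c' where "\<forall>t\<in>{a<..<b}. (\<Sum>j\<in>J. w j * f j t) = v' * t + c'"
      using pJ ab unfolding piecewise_affine_def by blast
    ultimately have "\<forall>t\<in>{a<..<b}. w k * f k t + (\<Sum>j\<in>J. w j * f j t)
        = (w k * v + v') * t + (w k * c + c')"
      by (simp add: algebra_simps)
    then show ?thesis by blast
  qed
  ultimately show ?case using insert.hyps by (simp add: piecewise_affine_def)
qed

lemma piecewise_affine_initially_affine:
  assumes pw: "piecewise_affine T f" and below: "\<forall>t\<in>T. t1 \<le> t"
  obtains v c where "\<forall>s<t1. f s = v * s + c"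
proof -
  have free: "\<exists>v c. \<forall>t\<in>{a<..<t1}. f t = v * t + c" if "a < t1" for a
    using pw that below by (fastforce simp: piecewise_affine_def)
  obtain v c where vc: "\<forall>t\<in>{t1 - 1<..<t1}. f t = v * t + c" using free by fastforce
  have "f s = v * s + c" if "s < t1" for s
  proof -
    obtain v' c' where vc': "\<forall>t\<in>{s - 1<..<t1}. f t = v' * t + c'" using free \<open>s < t1\<close> by fastforce
    have "\<forall>t\<in>{max (s - 1) (t1 - 1)<..<t1}. v' * t + c' = v * t + c"
      using vc vc' by (metis greaterThanLessThan_iff max_less_iff_conj)
    then have "v' = v \<and> c' = c"
      by (intro affine_eq_on_interval) (use \<open>s < t1\<close> in auto)
    with vc' \<open>s < t1\<close> show ?thesis by auto
  qed
  then show ?thesis using that by blast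
qed

lemma piecewise_affine_extend_right:
  assumes pw: "piecewise_affine T f"
    and gap: "\<delta> > 0" "{u<..<u + \<delta>} \<inter> T = {}"
    and before: "\<forall>s<u. f s = a * s + b"
    and right: "(f has_real_derivative a) (at_right u)"
  shows "\<forall>s<u + \<delta>. f s = a * s + b"
proof -
  have cont: "isCont f u"
    using pw by (simp add: piecewise_affine_def continuous_on_eq_continuous_at)
  have "eventually (\<lambda>y. f y = a * y + b) (at_left u)"
    by (rule eventually_mono[OF eventually_at_left_real[of "u - 1" u]]) (use before in auto)
  then have fu: "f u = a * u + b"
    by (rule affine_germ(1)[OF cont trivial_limit_at_left_real])
  have "u < u + \<delta>" using gap(1) by simp
  then obtain v c where vc: "\<forall>t\<in>{u<..<u + \<delta>}. f t = v * t + c"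
    using pw gap(2) unfolding piecewise_affine_def by blast
  have evr: "eventually (\<lambda>y. f y = v * y + c) (at_right u)"
    by (rule eventually_mono[OF eventually_at_right_real[of u "u + \<delta>"]]) (use vc gap(1) in auto)
  have "(f has_real_derivative v) (at_right u)"
    by (rule affine_germ(2)[OF cont trivial_limit_at_right_real evr])
  then have "v = a"
    using has_field_derivative_unique[OF _ right trivial_limit_at_right_real] by blast
  moreover have "f u = v * u + c"
    by (rule affine_germ(1)[OF cont trivial_limit_at_right_real evr])
  ultimately have "c = b" using fu by simp
  show ?thesis
  proof (intro allI impI)
    fix s assume "s < u + \<delta>"
    consider "s < u" | "s = u" | "s \<in> {u<..<u + \<delta>}"
      using \<open>s < u + \<delta>\<close> by fastforce
    then show "f s = a * s + b"
    proof cases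
      case 1
      then show ?thesis using before by blast
    next
      case 2
      then show ?thesis using fu by blast
    next
      case 3
      then show ?thesis using vc \<open>v = a\<close> \<open>c = b\<close> by blast
    qed
  qed
qed

lemma piecewise_affine_propagate:
  fixes f :: "'j \<Rightarrow> real \<Rightarrow> real"
  assumes fin: "finite T" and pw: "\<forall>j\<in>J. piecewise_affine T (f j)"
    and init: "\<forall>j\<in>J. \<forall>s<t0. f j s = a j * s + b j"
    and transfer: "\<And>t. \<forall>j\<in>J. (f j has_real_derivative a j) (at_left t) \<Longrightarrow>
                       \<forall>j\<in>J. (f j has_real_derivative a j) (at_right t)"
    and "j \<in> J"
  shows "f j t = a j * t + b j"
proof -
  define Q where "Q s \<longleftrightarrow> (\<forall>j\<in>J. f j s = a j * s + b j)" for s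
  have "\<exists>\<delta>>0. \<forall>s<u + \<delta>. Q s" if before: "\<forall>s<u. Q s" for u
  proof -
    obtain \<delta> where gap: "\<delta> > 0" "{u<..<u + \<delta>} \<inter> T = {}"
      using finite_gap_right[OF fin] by blast
    have before_j: "\<forall>s<u. f j s = a j * s + b j" if "j \<in> J" for j
      using before that by (simp add: Q_def)
    have "(f j has_real_derivative a j) (at_left u)" if "j \<in> J" for j
    proof (rule affine_germ(2)[OF _ trivial_limit_at_left_real])
      show "isCont (f j) u"
        using pw that by (simp add: piecewise_affine_def continuous_on_eq_continuous_at)
      show "eventually (\<lambda>y. f j y = a j * y + b j) (at_left u)"
        by (rule eventually_mono[OF eventually_at_left_real[of "u - 1" u]])
          (use before_j[OF that] in auto)
    qed
    then have right: "\<forall>j\<in>J. (f j has_real_derivative a j) (at_right u)"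
      using transfer by blast
    have "\<forall>s<u + \<delta>. f j s = a j * s + b j" if "j \<in> J" for j
      using piecewise_affine_extend_right[OF _ gap before_j] pw right that by blast
    then have "\<forall>s<u + \<delta>. Q s" by (simp add: Q_def)
    then show ?thesis using gap(1) by blast
  qed
  moreover have "\<forall>s<t0. Q s" using init by (simp add: Q_def)
  ultimately have "Q t" by (rule real_induct_right[rotated])
  then show ?thesis using \<open>j \<in> J\<close> by (simp add: Q_def)
qed

definition collision_times :: "nat \<Rightarrow> (nat \<Rightarrow> real \<Rightarrow> real) \<Rightarrow> real set" where
  "collision_times n q = fst ` collisions n q"

definition elastic_jump :: "nat \<Rightarrow> (nat \<Rightarrow> real) \<Rightarrow> (nat \<Rightarrow> real \<Rightarrow> real) \<Rightarrow> real \<Rightarrow>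
    (nat \<Rightarrow> real) \<Rightarrow> (nat \<Rightarrow> real) \<Rightarrow> bool" where
  "elastic_jump n m q t vl vr \<longleftrightarrow>
     (\<forall>i. Suc (Suc i) < n \<longrightarrow> \<not> (q i t = q (Suc i) t \<and> q (Suc i) t = q (Suc (Suc i)) t)) \<and>
     (\<forall>i. Suc i < n \<longrightarrow> q i t = q (Suc i) t \<longrightarrow>
        vr i = out_left (m i) (m (Suc i)) (vl i) (vl (Suc i)) \<and>
        vr (Suc i) = out_right (m i) (m (Suc i)) (vl i) (vl (Suc i))) \<and>
     (\<forall>i<n. \<not> (Suc i < n \<and> q i t = q (Suc i) t) \<and> \<not> (0 < i \<and> q (i - 1) t = q i t) \<longrightarrow>
        vr i = vl i)"

lemma finite_collision_times: "finite (collisions n q) \<Longrightarrow> finite (collision_times n q)"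
  by (simp add: collision_times_def)

lemma elastic_motion_piecewise_affine:
  assumes "elastic_motion n m q" and "i < n"
  shows "piecewise_affine (collision_times n q) (q i)"
proof -
  have "\<forall>t\<in>{a<..<b}. \<forall>k. (t, k) \<notin> collisions n q"
    if "{a<..<b} \<inter> collision_times n q = {}" for a b
    using that by (force simp: collision_times_def)
  then show ?thesis
    using assms unfolding elastic_motion_def piecewise_affine_def by blast
qed

lemma elastic_motion_ordered:
  assumes "elastic_motion n m q" and "i \<le> j" and "j < n"
  shows "q i t \<le> q j t"
  using assms(2,3)
proof (induction j)
  case 0
  then show ?case by simp
next
  case (Suc j)
  show ?case
  proof (cases "i = Suc j")
    case False
    then have "q i t \<le> q j t" using Suc by simp
    also have "q j t \<le> q (Suc j) t"
      using assms(1) Suc.prems(2) unfolding elastic_motion_def by blast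
    finally show ?thesis .
  qed simp
qed

lemma elastic_motion_jump:
  assumes "elastic_motion n m q"
  obtains vl vr where "\<forall>i<n. (q i has_real_derivative vl i) (at_left t) \<and>
                            (q i has_real_derivative vr i) (at_right t)"
    and "elastic_jump n m q t vl vr"
proof -
  have "\<exists>vl vr. (\<forall>i<n. (q i has_real_derivative vl i) (at_left t) \<and>
                           (q i has_real_derivative vr i) (at_right t)) \<and>
                 elastic_jump n m q t vl vr"
    using conjunct2[OF conjunct2[OF conjunct2[OF assms[unfolded elastic_motion_def]]]]
    unfolding elastic_jump_def by (rule spec)
  then show ?thesis using that by (elim exE conjE)
qed

lemma out_same_velocity:
  assumes "mi + mj > 0"
  shows "out_left mi mj V V = V" and "out_right mi mj V V = V"
  using assms by (auto simp: out_left_def out_right_def field_simps)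

lemma out_momentum:
  assumes "mi + mj > 0"
  shows "mi * (out_left mi mj x y - x) + mj * (out_right mi mj x y - y) = 0"
  using assms by (auto simp: out_left_def out_right_def field_simps)

lemma elastic_jump_partial_momentum:
  assumes masses: "\<forall>i<n. m i > 0" and jump: "elastic_jump n m q t vl vr" and "k \<le> n"
  shows "(\<Sum>j<k. m j * (vr j - vl j)) =
    (if 0 < k \<and> k < n \<and> q (k - 1) t = q k t then m (k - 1) * (vr (k - 1) - vl (k - 1)) else 0)"
  using \<open>k \<le> n\<close>
proof (induction k)
  case 0
  then show ?case by simp
next
  case (Suc k)
  then have "k < n" by simp
  have IH: "(\<Sum>j<k. m j * (vr j - vl j)) =
      (if 0 < k \<and> q (k - 1) t = q k t then m (k - 1) * (vr (k - 1) - vl (k - 1)) else 0)"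
    using Suc \<open>k < n\<close> by simp
  note tri = jump[unfolded elastic_jump_def, THEN conjunct1, rule_format]
  note law = jump[unfolded elastic_jump_def, THEN conjunct2, THEN conjunct1, rule_format]
  note keep = jump[unfolded elastic_jump_def, THEN conjunct2, THEN conjunct2, rule_format]
  consider (right) "Suc k < n \<and> q k t = q (Suc k) t"
    | (left) "0 < k \<and> q (k - 1) t = q k t"
    | (alone) "\<not> (Suc k < n \<and> q k t = q (Suc k) t)" "\<not> (0 < k \<and> q (k - 1) t = q k t)"
    by blast
  then show ?case
  proof cases
    case right
    \<comment> \<open>particle k starts a new colliding pair; no triple collision, so the sum so far vanishes\<close>
    have "\<not> (0 < k \<and> q (k - 1) t = q k t)"
      using tri[of "k - 1"] right by (cases k) auto
    then have "(\<Sum>j<k. m j * (vr j - vl j)) = 0" using IH by (simp only: if_not_P if_False)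
    then show ?thesis using right by simp
  next
    case left
    \<comment> \<open>particle k closes the pair (k-1, k), whose momentum change cancels\<close>
    then obtain i where i: "k = Suc i" by (cases k) auto
    have "m i + m k > 0" using masses \<open>k < n\<close> i by (simp add: add_pos_pos)
    moreover have "vr i = out_left (m i) (m k) (vl i) (vl k)" "vr k = out_right (m i) (m k) (vl i) (vl k)"
      using law[of i] left \<open>k < n\<close> i by simp_all
    ultimately have "m i * (vr i - vl i) + m k * (vr k - vl k) = 0"
      using out_momentum by simp
    moreover have "(\<Sum>j<k. m j * (vr j - vl j)) = m i * (vr i - vl i)"
      using IH left i by simp
    ultimately have "(\<Sum>j<Suc k. m j * (vr j - vl j)) = 0" by simp
    moreover have "\<not> (0 < Suc k \<and> Suc k < n \<and> q (Suc k - 1) t = q (Suc k) t)"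
      using tri[of i] left i by auto
    ultimately show ?thesis by (simp only: if_not_P if_False)
  next
    case alone
    then have "vr k = vl k" using keep[of k] \<open>k < n\<close> by blast
    moreover have "(\<Sum>j<k. m j * (vr j - vl j)) = 0" using IH alone(2) by (simp only: if_not_P if_False)
    ultimately have "(\<Sum>j<Suc k. m j * (vr j - vl j)) = 0" by simp
    moreover have "\<not> (0 < Suc k \<and> Suc k < n \<and> q (Suc k - 1) t = q (Suc k) t)"
      using alone(1) by simp
    ultimately show ?thesis by (simp only: if_not_P if_False)
  qed
qed

lemma elastic_jump_momentum:
  assumes masses: "\<forall>i<n. m i > 0" and jump: "elastic_jump n m q t vl vr" and "k \<le> n"
    and separated: "\<not> (0 < k \<and> k < n \<and> q (k - 1) t = q k t)"
  shows "(\<Sum>j<k. m j * vr j) = (\<Sum>j<k. m j * vl j)"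
proof -
  have "(\<Sum>j<k. m j * (vr j - vl j)) = 0"
    using elastic_jump_partial_momentum[OF masses jump \<open>k \<le> n\<close>] separated
    by (simp only: if_not_P if_False)
  then show ?thesis by (simp add: right_diff_distrib sum_subtractf)
qed

lemma elastic_jump_common_velocity:
  assumes masses: "\<forall>i<n. m i > 0" and jump: "elastic_jump n m q t vl vr"
    and common: "\<forall>i<n. vl i = V" and "j < n"
  shows "vr j = V"
proof -
  note law = jump[unfolded elastic_jump_def, THEN conjunct2, THEN conjunct1, rule_format]
  note keep = jump[unfolded elastic_jump_def, THEN conjunct2, THEN conjunct2, rule_format]
  consider (right) "Suc j < n \<and> q j t = q (Suc j) t"
    | (left) "0 < j \<and> q (j - 1) t = q j t"
    | (alone) "\<not> (Suc j < n \<and> q j t = q (Suc j) t)" "\<not> (0 < j \<and> q (j - 1) t = q j t)"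
    by blast
  then show ?thesis
  proof cases
    case right
    have "m j + m (Suc j) > 0" using masses right by (simp add: add_pos_pos)
    then show ?thesis using law[of j] right common \<open>j < n\<close> out_same_velocity(1) by simp
  next
    case left
    then obtain i where i: "j = Suc i" by (cases j) auto
    have "m i + m j > 0" using masses \<open>j < n\<close> i by (simp add: add_pos_pos)
    then show ?thesis using law[of i] left common \<open>j < n\<close> i out_same_velocity(2) by simp
  next
    case alone
    then show ?thesis using keep[of j] common \<open>j < n\<close> by simp
  qed
qed

lemma cluster_momentum_affine:
  assumes masses: "\<forall>i<n. m i > 0" and motion: "elastic_motion n m q"
    and fin: "finite (collisions n q)" and "k \<le> n"
    and separated: "\<forall>t. \<not> (0 < k \<and> k < n \<and> q (k - 1) t = q k t)"
  obtains a b where "\<forall>t. (\<Sum>j<k. m j * q j t) = a * t + b"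
proof -
  let ?T = "collision_times n q"
  define F where "F t = (\<Sum>j<k. m j * q j t)" for t
  have finT: "finite ?T" using fin by (rule finite_collision_times)
  have "piecewise_affine ?T F"
    unfolding F_def using elastic_motion_piecewise_affine[OF motion] \<open>k \<le> n\<close>
    by (intro piecewise_affine_sum) auto
  moreover obtain t1 where t1: "\<forall>t\<in>?T. t1 \<le> t"
    using bdd_below_finite[OF finT] by (auto simp: bdd_below_def)
  ultimately obtain a b where before: "\<forall>s<t1. F s = a * s + b"
    by (rule piecewise_affine_initially_affine)
  have transfer: "(F has_real_derivative a) (at_right t)"
    if left: "(F has_real_derivative a) (at_left t)" for t
  proof -
    obtain vl vr where d: "\<forall>i<n. (q i has_real_derivative vl i) (at_left t) \<and>
                                 (q i has_real_derivative vr i) (at_right t)"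
      and jump: "elastic_jump n m q t vl vr"
      using elastic_motion_jump[OF motion] by blast
    have "(F has_real_derivative (\<Sum>j<k. m j * vl j)) (at_left t)"
      unfolding F_def using d \<open>k \<le> n\<close> by (intro DERIV_sum DERIV_cmult) auto
    then have "a = (\<Sum>j<k. m j * vl j)"
      using has_field_derivative_unique[OF left _ trivial_limit_at_left_real] by blast
    moreover have "(F has_real_derivative (\<Sum>j<k. m j * vr j)) (at_right t)"
      unfolding F_def using d \<open>k \<le> n\<close> by (intro DERIV_sum DERIV_cmult) auto
    moreover have "(\<Sum>j<k. m j * vr j) = (\<Sum>j<k. m j * vl j)"
      using elastic_jump_momentum[OF masses jump \<open>k \<le> n\<close>] separated by blast
    ultimately show ?thesis by simp
  qed
  have "F t = a * t + b" for t
    using piecewise_affine_propagate[where J = "{()}" and f = "\<lambda>_. F" and a = "\<lambda>_. a" and b = "\<lambda>_. b"]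
      finT \<open>piecewise_affine ?T F\<close> before transfer by blast
  then show ?thesis using that unfolding F_def by blast
qed

definition centre_of_mass :: "('a \<Rightarrow> real) \<Rightarrow> 'a set \<Rightarrow> ('a \<Rightarrow> real) \<Rightarrow> real" where
  "centre_of_mass w A x = (\<Sum>j\<in>A. w j * x j) / sum w A"

lemma centre_of_mass_gap:
  fixes w x :: "'a \<Rightarrow> real"
  assumes "finite A" and "k \<in> A" and pos: "\<forall>j\<in>A. 0 < w j" and below: "\<forall>j\<in>A. x j \<le> y"
  shows "w k * (y - x k) \<le> sum w A * (y - centre_of_mass w A x)"
proof -
  have "sum w A > 0" using assms by (intro sum_pos2[of A k]) (auto simp: less_imp_le)
  have "w k * (y - x k) \<le> (\<Sum>j\<in>A. w j * (y - x j))"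
    by (rule member_le_sum) (use assms in \<open>auto simp: less_imp_le\<close>)
  also have "\<dots> = sum w A * y - (\<Sum>j\<in>A. w j * x j)"
    by (simp add: right_diff_distrib sum_subtractf sum_distrib_left sum_distrib_right mult.commute)
  also have "\<dots> = sum w A * (y - centre_of_mass w A x)"
    using \<open>sum w A > 0\<close> by (simp add: centre_of_mass_def right_diff_distrib)
  finally show ?thesis .
qed

lemma spread_le_centres_distance:
  fixes w x :: "nat \<Rightarrow> real"
  assumes pos: "\<forall>j<n. 0 < w j" and ord: "\<And>i j. i \<le> j \<Longrightarrow> j < n \<Longrightarrow> x i \<le> x j"
    and "Suc i0 < n"
  shows "x (n - 1) - x 0 \<le> (sum w {..<Suc i0} / w 0 + 1 + sum w {Suc i0..<n} / w (n - 1)) *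
           (centre_of_mass w {Suc i0..<n} x - centre_of_mass w {..<Suc i0} x)"
proof -
  define L R where "L = {..<Suc i0}" and "R = {Suc i0..<n}"
  define cL cR where "cL = centre_of_mass w L x" and "cR = centre_of_mass w R x"
  define C where "C = sum w L / w 0 + 1 + sum w R / w (n - 1)"
  have "w 0 > 0" "w (n - 1) > 0" using pos \<open>Suc i0 < n\<close> by auto
  have "x 0 \<le> x i0" "x i0 \<le> x (Suc i0)" "x (Suc i0) \<le> x (n - 1)"
    using ord \<open>Suc i0 < n\<close> by auto
  have gap_left: "w k * (x i0 - x k) \<le> sum w L * (x i0 - cL)" if "k \<le> i0" for k
    unfolding cL_def L_def using that pos ord \<open>Suc i0 < n\<close>
    by (intro centre_of_mass_gap) auto
  have gap_right: "w k * (x k - x (Suc i0)) \<le> sum w R * (cR - x (Suc i0))"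
    if "Suc i0 \<le> k" "k < n" for k
  proof -
    have "w k * (- x (Suc i0) - - x k) \<le> sum w R * (- x (Suc i0) - centre_of_mass w R (\<lambda>j. - x j))"
      unfolding R_def using that pos ord by (intro centre_of_mass_gap) auto
    then show ?thesis by (simp add: cR_def centre_of_mass_def sum_negf)
  qed
  have "sum w L > 0" unfolding L_def by (rule sum_pos) (use pos \<open>Suc i0 < n\<close> in auto)
  have "sum w R > 0" unfolding R_def by (rule sum_pos) (use pos \<open>Suc i0 < n\<close> in auto)
  \<comment> \<open>the distance of the centres splits into three nonnegative parts around the gap\<close>
  have part_left: "0 \<le> x i0 - cL" and part_right: "0 \<le> cR - x (Suc i0)"
    using gap_left[of i0] gap_right[of "Suc i0"] \<open>sum w L > 0\<close> \<open>sum w R > 0\<close> \<open>Suc i0 < n\<close>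
    by (simp_all add: zero_le_mult_iff)
  \<comment> \<open>each outer particle is at most a fixed multiple of its part away from the gap\<close>
  have "x i0 - x 0 \<le> sum w L / w 0 * (x i0 - cL)"
    using gap_left[of 0] \<open>w 0 > 0\<close> by (simp add: field_simps)
  also have "\<dots> \<le> C * (x i0 - cL)"
    using part_left \<open>w (n - 1) > 0\<close> \<open>sum w R > 0\<close> by (intro mult_right_mono) (auto simp: C_def)
  finally have bound_left: "x i0 - x 0 \<le> C * (x i0 - cL)" .
  have "x (n - 1) - x (Suc i0) \<le> sum w R / w (n - 1) * (cR - x (Suc i0))"
    using gap_right[of "n - 1"] \<open>w (n - 1) > 0\<close> \<open>Suc i0 < n\<close> by (simp add: field_simps)
  also have "\<dots> \<le> C * (cR - x (Suc i0))"
    using part_right \<open>w 0 > 0\<close> \<open>sum w L > 0\<close> by (intro mult_right_mono) (auto simp: C_def)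
  finally have bound_right: "x (n - 1) - x (Suc i0) \<le> C * (cR - x (Suc i0))" .
  have "1 \<le> C" using \<open>w 0 > 0\<close> \<open>w (n - 1) > 0\<close> \<open>sum w L > 0\<close> \<open>sum w R > 0\<close>
    by (simp add: C_def)
  then have "x (Suc i0) - x i0 \<le> C * (x (Suc i0) - x i0)"
    using mult_right_mono[of 1 C "x (Suc i0) - x i0"] \<open>x i0 \<le> x (Suc i0)\<close> by simp
  with bound_left bound_right have "x (n - 1) - x 0 \<le> C * (cR - cL)"
    by (simp add: algebra_simps)
  then show ?thesis by (simp add: C_def cL_def cR_def L_def R_def)
qed

lemma bounded_spread:
  fixes w :: "nat \<Rightarrow> real" and x :: "nat \<Rightarrow> real \<Rightarrow> real"
  assumes pos: "\<forall>j<n. 0 < w j"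
    and ord: "\<And>i j t. i \<le> j \<Longrightarrow> j < n \<Longrightarrow> x i t \<le> x j t"
    and "Suc i0 < n"
    and left: "\<forall>t. (\<Sum>j<Suc i0. w j * x j t) = aL * t + bL"
    and total: "\<forall>t. (\<Sum>j<n. w j * x j t) = aN * t + bN"
  obtains K where "\<forall>t. x (n - 1) t - x 0 t \<le> K"
proof -
  define L R where "L = {..<Suc i0}" and "R = {Suc i0..<n}"
  define C where "C = sum w L / w 0 + 1 + sum w R / w (n - 1)"
  have "sum w L > 0" unfolding L_def by (rule sum_pos) (use pos \<open>Suc i0 < n\<close> in auto)
  have "sum w R > 0" unfolding R_def by (rule sum_pos) (use pos \<open>Suc i0 < n\<close> in auto)
  have "C > 0" using pos \<open>sum w L > 0\<close> \<open>sum w R > 0\<close> \<open>Suc i0 < n\<close>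
    by (simp add: C_def add_pos_pos)
  have split: "(\<Sum>j<n. w j * x j t) = (\<Sum>j\<in>L. w j * x j t) + (\<Sum>j\<in>R. w j * x j t)" for t
    unfolding L_def R_def lessThan_atLeast0
    by (rule sum.atLeastLessThan_concat[symmetric]) (use \<open>Suc i0 < n\<close> in auto)
  define \<alpha> \<beta> where "\<alpha> = (aN - aL) / sum w R - aL / sum w L"
    and "\<beta> = (bN - bL) / sum w R - bL / sum w L"
  have distance: "centre_of_mass w R (\<lambda>j. x j t) - centre_of_mass w L (\<lambda>j. x j t) = \<alpha> * t + \<beta>" for t
  proof -
    have FL: "(\<Sum>j\<in>L. w j * x j t) = aL * t + bL" using left unfolding L_def by blast
    then have FR: "(\<Sum>j\<in>R. w j * x j t) = (aN - aL) * t + (bN - bL)"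
      using split[of t] total by (simp add: algebra_simps)
    have "centre_of_mass w L (\<lambda>j. x j t) = aL / sum w L * t + bL / sum w L"
      by (simp add: centre_of_mass_def FL add_divide_distrib)
    moreover have "centre_of_mass w R (\<lambda>j. x j t) = (aN - aL) / sum w R * t + (bN - bL) / sum w R"
      by (simp add: centre_of_mass_def FR add_divide_distrib)
    ultimately show ?thesis by (simp add: \<alpha>_def \<beta>_def algebra_simps diff_divide_distrib)
  qed
  have spread: "x (n - 1) t - x 0 t \<le> C * (\<alpha> * t + \<beta>)" for t
    using spread_le_centres_distance[of n w "\<lambda>j. x j t" i0] pos ord \<open>Suc i0 < n\<close> distance[of t]
    by (simp add: C_def L_def R_def)
  \<comment> \<open>the spread is nonnegative, so the distance of the centres never changes sign, hence is constant\<close>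
  have "0 \<le> \<alpha> * t + \<beta>" for t
  proof -
    have "x 0 t \<le> x (n - 1) t" using ord \<open>Suc i0 < n\<close> by simp
    then have "0 \<le> C * (\<alpha> * t + \<beta>)" using spread[of t] by linarith
    then show ?thesis using \<open>C > 0\<close> by (simp add: zero_le_mult_iff)
  qed
  then have "\<alpha> = 0" by (intro affine_nonneg_is_constant) blast
  then show ?thesis using that[of "C * \<beta>"] spread by simp
qed

lemma common_velocity_of_bounded_spread:
  fixes x :: "nat \<Rightarrow> real \<Rightarrow> real"
  assumes ord: "\<And>i j t. i \<le> j \<Longrightarrow> j < n \<Longrightarrow> x i t \<le> x j t"
    and spread: "\<forall>t. x (n - 1) t - x 0 t \<le> K"
    and init: "\<forall>j<n. \<forall>s<t1. x j s = v j * s + c j" and "j < n"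
  shows "v j = v 0"
proof -
  have "\<forall>s<t1. 0 \<le> (v j - v 0) * s + (c j - c 0) \<and> (v j - v 0) * s + (c j - c 0) \<le> K"
  proof (intro allI impI)
    fix s assume "s < t1"
    then have "(v j - v 0) * s + (c j - c 0) = x j s - x 0 s"
      using init \<open>j < n\<close> by (simp add: algebra_simps)
    moreover have "x 0 s \<le> x j s" "x j s \<le> x (n - 1) s" using ord \<open>j < n\<close> by auto
    ultimately show "0 \<le> (v j - v 0) * s + (c j - c 0) \<and> (v j - v 0) * s + (c j - c 0) \<le> K"
      using spread[rule_format, of s] by linarith
  qed
  then have "v j - v 0 = 0" by (rule affine_bounded_on_left_halfline)
  then show ?thesis by simp
qed

lemma elastic_motion_initially_free:
  assumes motion: "elastic_motion n m q" and fin: "finite (collisions n q)"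
  obtains t1 v c where "\<forall>j<n. \<forall>s<t1. q j s = v j * s + c j"
proof -
  obtain t1 where t1: "\<forall>t\<in>collision_times n q. t1 \<le> t"
    using bdd_below_finite[OF finite_collision_times[OF fin]] by (auto simp: bdd_below_def)
  have "\<forall>j<n. \<exists>vc. \<forall>s<t1. q j s = fst vc * s + snd vc"
  proof (intro allI impI)
    fix j assume "j < n"
    obtain v c where "\<forall>s<t1. q j s = v * s + c"
      using piecewise_affine_initially_affine[OF elastic_motion_piecewise_affine[OF motion \<open>j < n\<close>] t1] .
    then show "\<exists>vc. \<forall>s<t1. q j s = fst vc * s + snd vc" by (intro exI[of _ "(v, c)"]) simp
  qed
  then obtain vc where "\<forall>j<n. \<forall>s<t1. q j s = fst (vc j) * s + snd (vc j)"
    by metis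
  then show ?thesis by (intro that[of t1 "\<lambda>j. fst (vc j)" "\<lambda>j. snd (vc j)"])
qed

lemma uniform_motion_persists:
  assumes masses: "\<forall>i<n. m i > 0" and motion: "elastic_motion n m q"
    and fin: "finite (collisions n q)"
    and init: "\<forall>j<n. \<forall>s<t1. q j s = V * s + c j" and "j < n"
  shows "q j t = V * t + c j"
proof -
  have transfer: "\<forall>j\<in>{..<n}. (q j has_real_derivative V) (at_right t)"
    if left: "\<forall>j\<in>{..<n}. (q j has_real_derivative V) (at_left t)" for t
  proof -
    obtain vl vr where d: "\<forall>i<n. (q i has_real_derivative vl i) (at_left t) \<and>
                                (q i has_real_derivative vr i) (at_right t)"
      and jump: "elastic_jump n m q t vl vr"
      using elastic_motion_jump[OF motion] by blast
    have "\<forall>i<n. vl i = V"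
      using d left has_field_derivative_unique[OF _ _ trivial_limit_at_left_real] by blast
    then have "\<forall>i<n. vr i = V" using elastic_jump_common_velocity[OF masses jump] by blast
    then show ?thesis using d by auto
  qed
  have "\<forall>j\<in>{..<n}. piecewise_affine (collision_times n q) (q j)"
    using elastic_motion_piecewise_affine[OF motion] by blast
  from piecewise_affine_propagate[OF finite_collision_times[OF fin] this, of t1 "\<lambda>_. V" c]
  show ?thesis using init transfer \<open>j < n\<close> by simp
qed

lemma free_gap:
  assumes fin: "finite (collisions n q)" and few: "card (collisions n q) < n - 1"
  obtains i0 where "Suc i0 < n" and "\<forall>t. q i0 t \<noteq> q (Suc i0) t"
proof -
  have sub: "snd ` collisions n q \<subseteq> {..<n - 1}" by (auto simp: collisions_def)
  have "card (snd ` collisions n q) < card {..<n - 1}"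
    using card_image_le[OF fin, of snd] few by simp
  then have "snd ` collisions n q \<noteq> {..<n - 1}" by auto
  then obtain i0 where "i0 < n - 1" and "i0 \<notin> snd ` collisions n q"
    using sub by blast
  then show ?thesis by (intro that[of i0]) (force simp: collisions_def)+
qed

lemma uniform_motion_no_collisions:
  assumes fin: "finite (collisions n q)" and uniform: "\<forall>j<n. \<forall>t. q j t = V * t + c j"
  shows "collisions n q = {}"
proof (rule ccontr)
  assume "collisions n q \<noteq> {}"
  then obtain t i where "Suc i < n" and "q i t = q (Suc i) t" by (auto simp: collisions_def)
  then have "c i = c (Suc i)" using uniform by simp
  then have "range (\<lambda>s. (s, i)) \<subseteq> collisions n q"
    using uniform \<open>Suc i < n\<close> by (auto simp: collisions_def)
  moreover have "inj (\<lambda>s :: real. (s, i))" by (auto intro: injI)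
  ultimately have "finite (UNIV :: real set)"
    using fin by (meson finite_imageD finite_subset)
  then show False by (simp add: infinite_UNIV_char_0)
qed

theorem mainTheorem1:
  fixes n :: nat and m :: "nat \<Rightarrow> real" and q :: "nat \<Rightarrow> real \<Rightarrow> real"
  assumes masses: "\<forall>i<n. m i > 0"
    and motion: "elastic_motion n m q"
    and fin: "finite (collisions n q)"
    and few: "card (collisions n q) < n - 1"
  shows "(\<exists>v. \<forall>i<n. \<forall>t. (q i has_real_derivative v) (at t)) \<and> collisions n q = {}"
proof -
  obtain i0 where gap: "Suc i0 < n" "\<forall>t. q i0 t \<noteq> q (Suc i0) t"
    using free_gap[OF fin few] .
  have ord: "\<And>i j t. i \<le> j \<Longrightarrow> j < n \<Longrightarrow> q i t \<le> q j t"
    using elastic_motion_ordered[OF motion] .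
  have "\<forall>t. \<not> (0 < Suc i0 \<and> Suc i0 < n \<and> q (Suc i0 - 1) t = q (Suc i0) t)" using gap(2) by simp
  then obtain aL bL where left: "\<forall>t. (\<Sum>j<Suc i0. m j * q j t) = aL * t + bL"
    by (rule cluster_momentum_affine[OF masses motion fin less_imp_le[OF gap(1)]])
  have "\<forall>t. \<not> (0 < n \<and> n < n \<and> q (n - 1) t = q n t)" by simp
  then obtain aN bN where total: "\<forall>t. (\<Sum>j<n. m j * q j t) = aN * t + bN"
    by (rule cluster_momentum_affine[OF masses motion fin order.refl])
  obtain K where spread: "\<forall>t. q (n - 1) t - q 0 t \<le> K"
    using bounded_spread[OF masses ord gap(1) left total] .
  obtain t1 v c where init: "\<forall>j<n. \<forall>s<t1. q j s = v j * s + c j"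
    using elastic_motion_initially_free[OF motion fin] .
  then have "\<forall>j<n. \<forall>s<t1. q j s = v 0 * s + c j"
    using init common_velocity_of_bounded_spread[OF ord spread init] by metis
  then have uniform: "\<forall>j<n. \<forall>t. q j t = v 0 * t + c j"
    using uniform_motion_persists[OF masses motion fin] by blast
  have "(q i has_real_derivative v 0) (at t)" if "i < n" for i t
  proof -
    have "q i = (\<lambda>t. v 0 * t + c i)" using uniform that by auto
    then show ?thesis by (auto intro!: derivative_eq_intros)
  qed
  moreover have "collisions n q = {}" using uniform_motion_no_collisions[OF fin uniform] .
  ultimately show ?thesis by blast
qed

end
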